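(* Let $G=\langle A\mid R\rangle$ be a finitely presented group ($A$, $R$ finite) with Dehn function $D$, and suppose $G\in\mathcal{B}_f$ for some function $f\in\mathfrak{F}$ that is not identically zero. Let $p,q\in\mathfrak{F}$ satisfy $p\preceq D\preceq q$. Then there exist constants $C,K,M,N$ such that $p(n)\le C n^2 q(Kf(Mn))$ for all $n\ge N$. In particular, if $p=q=n^d$ for some $d>2$, then $n^{(d-2)/d}\preceq f$; and if $p=q=\mathfrak{e}$, then $\mathfrak{i}\preceq f$.
   Context: The Dehn function of $G=\langle A\mid R\rangle$ is $D(n)=\max\{\mathrm{Area}(w): w\in S^*, |w|\le n, \pi(w)=e\}$, where $S=A\cup A^{-1}$ and $\mathrm{Area}(w)$ is the least $k$ such that $w=\prod_{i=1}^k v_i r_i^{\pm1}v_i^{-1}$ in the free group $F(A)$ with $r_i\in R$. $\mathfrak{i}(n)=n$ and $\mathfrak{e}(n)=\exp(n)$. Convolution: for $w_1,\dots,w_k\in\Sigma^*$, $w_1\otimes\cdots\otimes w_k$ is the string over $(\Sigma\cup\{\diamond\})^k$ obtained by padding the shorter strings with a new symbol $\diamond$ and reading them in parallel; a relation is FA-recognizable if the set of convolutions of its tuples is regular. $\pi:S^*\to G$ is the canonical evaluation map, $d_A$ the word metric of $\Gamma(G,A)$. A Cayley automatic representation of $G$ is a bijection $\psi:L\to G$ from a regular language $L\subseteq S^*$ such that for every $a\in A$ the relation $\{(\psi^{-1}(g),\psi^{-1}(ga)) : g\in G\}$ is FA-recognizable; its function is $h(n)=\max\{d_A(\pi(w),\psi(w))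 : w\in L, |w|\le n\}$. $\mathfrak{F}$ is the set of nondecreasing functions from some interval $[Q,\infty)\cap\mathbb{N}$ to the nonnegative reals; $g\preceq f$ means there exist $N\ge0$ and positive integers $K,M$ with $g(n)\le Kf(Mn)$ for all $n\ge N$. $G\in\mathcal{B}_f$ means $G$ admits a Cayley automatic representation with $h\preceq f$ (independent of the finite generating set). *)

theory Defs
  imports Complex_Main
begin

text \<open>A letter (a, True) stands for the generator a, (a, False) for its inverse.\<close>
type_synonym 'a letter = "'a \<times> bool"

definition gens :: "'a set \<Rightarrow> 'a letter set" where
  "gens A = A \<times> UNIV"

fun inv_letter :: "'a letter \<Rightarrow> 'a letter" where
  "inv_letter (a, b) = (a, \<not> b)"

definition inv_word :: "'a letter list \<Rightarrow> 'a letter list" where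
  "inv_word w = rev (map inv_letter w)"

definition free_red1 :: "('a letter list \<times> 'a letter list) set" where
  "free_red1 = {(u @ [x, inv_letter x] @ v, u @ v) | u x v. True}"

definition free_eq :: "'a letter list \<Rightarrow> 'a letter list \<Rightarrow> bool" where
  "free_eq u v \<longleftrightarrow> (u, v) \<in> (free_red1 \<union> free_red1\<inverse>)\<^sup>*"

definition conj_prod :: "('a letter list \<times> 'a letter list \<times> bool) list \<Rightarrow> 'a letter list" where
  "conj_prod ts = concat (map (\<lambda>(v, r, e). v @ (if e then r else inv_word r) @ inv_word v) ts)"

definition valid_conjs :: "'a set \<Rightarrow> 'a letter list set \<Rightarrow> ('a letter list \<times> 'a letter list \<times> bool) list \<Rightarrow> bool" where
  "valid_conjs A R ts \<longleftrightarrow> (\<forall>(v, r, e) \<in> set ts. v \<in> lists (gens A) \<and> r \<in> R)"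

definition trivial_word :: "'a set \<Rightarrow> 'a letter list set \<Rightarrow> 'a letter list \<Rightarrow> bool" where
  "trivial_word A R w \<longleftrightarrow> (\<exists>ts. valid_conjs A R ts \<and> free_eq w (conj_prod ts))"

definition area :: "'a set \<Rightarrow> 'a letter list set \<Rightarrow> 'a letter list \<Rightarrow> nat" where
  "area A R w = (LEAST k. \<exists>ts. length ts = k \<and> valid_conjs A R ts \<and> free_eq w (conj_prod ts))"

definition dehn :: "'a set \<Rightarrow> 'a letter list set \<Rightarrow> nat \<Rightarrow> real" where
  "dehn A R n = real (Max {area A R w | w. w \<in> lists (gens A) \<and> length w \<le> n \<and> trivial_word A R w})"

definition elem :: "'a set \<Rightarrow> 'a letter list set \<Rightarrow> 'a letter list \<Rightarrow> 'a letter list set" where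
  "elem A R u = {v \<in> lists (gens A). trivial_word A R (u @ inv_word v)}"

definition grp :: "'a set \<Rightarrow> 'a letter list set \<Rightarrow> 'a letter list set set" where
  "grp A R = elem A R ` lists (gens A)"

definition word_dist :: "'a set \<Rightarrow> 'a letter list set \<Rightarrow> 'a letter list set \<Rightarrow> 'a letter list set \<Rightarrow> nat" where
  "word_dist A R g h = (LEAST k. \<exists>x \<in> lists (gens A). length x = k \<and> (\<exists>y \<in> g. elem A R (y @ x) = h))"

definition regular_lang :: "'b list set \<Rightarrow> bool" where
  "regular_lang L \<longleftrightarrow> (\<exists>(\<delta> :: nat \<Rightarrow> 'b \<Rightarrow> nat) q0 Fin.
      finite (range (foldl \<delta> q0)) \<and> L = {w. foldl \<delta> q0 w \<in> Fin})"

definition nth_opt :: "'b list \<Rightarrow> nat \<Rightarrow> 'b option" where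
  "nth_opt u i = (if i < length u then Some (u ! i) else None)"

text \<open>Convolution u \<otimes> v; the padding symbol \<diamond> is None.\<close>
definition conv :: "'b list \<Rightarrow> 'b list \<Rightarrow> ('b option \<times> 'b option) list" where
  "conv u v = map (\<lambda>i. (nth_opt u i, nth_opt v i)) [0..<max (length u) (length v)]"

definition fa_recognizable :: "('b list \<times> 'b list) set \<Rightarrow> bool" where
  "fa_recognizable Rel \<longleftrightarrow> regular_lang ((\<lambda>(u, v). conv u v) ` Rel)"

definition cayley_automatic :: "'a set \<Rightarrow> 'a letter list set \<Rightarrow> 'a letter list set \<Rightarrow>
    ('a letter list \<Rightarrow> 'a letter list set) \<Rightarrow> bool" where
  "cayley_automatic A R L \<psi> \<longleftrightarrow>
     L \<subseteq> lists (gens A) \<and> regular_lang L \<and> bij_betw \<psi> L (grp A R) \<and>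
     (\<forall>a \<in> A. fa_recognizable
        {(u, v). u \<in> L \<and> v \<in> L \<and> (\<exists>x \<in> \<psi> u. \<psi> v = elem A R (x @ [(a, True)]))})"

definition ca_function :: "'a set \<Rightarrow> 'a letter list set \<Rightarrow> 'a letter list set \<Rightarrow>
    ('a letter list \<Rightarrow> 'a letter list set) \<Rightarrow> nat \<Rightarrow> real" where
  "ca_function A R L \<psi> n = real (Max (insert 0
      {word_dist A R (elem A R w) (\<psi> w) | w. w \<in> L \<and> length w \<le> n}))"

text \<open>f is in F with domain [Q,\<infinity>); values below Q are irrelevant.\<close>
definition inF_on :: "nat \<Rightarrow> (nat \<Rightarrow> real) \<Rightarrow> bool" where
  "inF_on Q f \<longleftrightarrow> (\<forall>n\<ge>Q. f n \<ge> 0) \<and> (\<forall>m n. Q \<le> m \<longrightarrow> m \<le> n \<longrightarrow> f m \<le> f n)"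

definition inF :: "(nat \<Rightarrow> real) \<Rightarrow> bool" where
  "inF f \<longleftrightarrow> (\<exists>Q. inF_on Q f)"

definition preceq :: "(nat \<Rightarrow> real) \<Rightarrow> (nat \<Rightarrow> real) \<Rightarrow> bool" (infix "\<preceq>\<^sub>F" 50) where
  "g \<preceq>\<^sub>F f \<longleftrightarrow> (\<exists>N K M :: nat. K > 0 \<and> M > 0 \<and> (\<forall>n\<ge>N. g n \<le> real K * f (M * n)))"

definition in_B :: "'a set \<Rightarrow> 'a letter list set \<Rightarrow> (nat \<Rightarrow> real) \<Rightarrow> bool" where
  "in_B A R f \<longleftrightarrow> (\<exists>L \<psi>. cayley_automatic A R L \<psi> \<and> ca_function A R L \<psi> \<preceq>\<^sub>F f)"

end

theory Submission
  imports Defs "HOL-Real_Asymp.Real_Asymp"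
begin

text \<open>Let \<open>\<psi> : L \<rightarrow> G\<close> be a Cayley automatic representation whose displacement
  \<open>h(n) = max {d(\<pi> w, \<psi> w) : |w| \<le> n}\<close> satisfies \<open>h \<preceq> f\<close>. Given a null-homotopic word \<open>w\<close> of
  length \<open>n\<close>, let \<open>u\<^sub>i\<close> be the normal form of its prefix of length \<open>i\<close>. Consecutive normal forms
  are related by one of the automatic relations \<open>{(\<psi>\<^sup>-\<^sup>1 g, \<psi>\<^sup>-\<^sup>1 (g a))}\<close>. Pumping down the
  automaton of such a relation shows that related words differ in length by \<open>O(1)\<close>, so every
  \<open>u\<^sub>i\<close> has length \<open>O(n)\<close>, and that every common prefix of a related pair extends to a related
  pair with tails of bounded length. Hence equal-length prefixes of \<open>u\<^sub>i\<close> and \<open>u\<^sub>i\<^sub>+\<^sub>1\<close> are joined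
  by rungs of length \<open>O(h(O(n)))\<close>, which cut the region between them into \<open>O(n)\<close> cells of
  perimeter \<open>O(h(O(n)))\<close>. Summing over the \<open>n\<close> letters gives
  \<open>D(n) \<le> C n\<^sup>2 D(c + 4 h(c' n))\<close>; squeezing \<open>D\<close> between \<open>p\<close> and \<open>q\<close> and using \<open>h \<preceq> f\<close>
  yields the main estimate, and the two special cases follow by solving
  \<open>n\<^sup>d \<le> C n\<^sup>2 (K f(M n))\<^sup>d\<close> and \<open>exp n \<le> C n\<^sup>2 exp (K f(M n))\<close> for \<open>f\<close>.\<close>

subsection \<open>Inverse words and free reduction\<close>

lemma inv_letter_inv [simp]: "inv_letter (inv_letter x) = x"
  by (cases x) auto

lemma inv_word_inv [simp]: "inv_word (inv_word w) = w"
  by (simp add: inv_word_def rev_map comp_def)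

lemma inv_word_append [simp]: "inv_word (u @ v) = inv_word v @ inv_word u"
  by (simp add: inv_word_def)

lemma inv_word_Nil [simp]: "inv_word [] = []"
  by (simp add: inv_word_def)

lemma inv_word_Cons [simp]: "inv_word (x # u) = inv_word u @ [inv_letter x]"
  by (simp add: inv_word_def)

lemma length_inv_word [simp]: "length (inv_word u) = length u"
  by (simp add: inv_word_def)

lemma inv_letter_in_gens [simp]: "inv_letter x \<in> gens A \<longleftrightarrow> x \<in> gens A"
  by (cases x) (simp add: gens_def)

lemma inv_word_in_lists [simp]: "inv_word u \<in> lists (gens A) \<longleftrightarrow> u \<in> lists (gens A)"
  by (simp only: inv_word_def in_lists_conv_set set_rev set_map ball_simps inv_letter_in_gens)

lemma take_in_lists: "w \<in> lists X \<Longrightarrow> take n w \<in> lists X"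
  by (meson in_lists_conv_set in_set_takeD)

lemma drop_in_lists: "w \<in> lists X \<Longrightarrow> drop n w \<in> lists X"
  by (meson in_lists_conv_set in_set_dropD)

lemma free_eq_refl [simp]: "free_eq u u"
  by (simp add: free_eq_def)

lemma free_eq_sym: "free_eq u v \<Longrightarrow> free_eq v u"
proof -
  have "sym ((free_red1 \<union> free_red1\<inverse>)\<^sup>*)"
    by (intro sym_rtrancl) (auto simp: sym_def)
  then show "free_eq u v \<Longrightarrow> free_eq v u"
    by (auto simp: free_eq_def sym_def)
qed

lemma free_eq_trans [trans]: "free_eq u v \<Longrightarrow> free_eq v w \<Longrightarrow> free_eq u w"
  unfolding free_eq_def by (rule rtrancl_trans)

lemma free_eq_cancel: "free_eq (u @ [x, inv_letter x] @ v) (u @ v)"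
  unfolding free_eq_def free_red1_def by (rule r_into_rtrancl) blast

lemma free_red1_context:
  assumes "(a, b) \<in> free_red1"
  shows "(p @ a @ s, p @ b @ s) \<in> free_red1"
proof -
  obtain u x v where "a = u @ [x, inv_letter x] @ v" "b = u @ v"
    using assms by (auto simp: free_red1_def)
  then show ?thesis
    unfolding free_red1_def by (intro CollectI exI[of _ "p @ u"] exI[of _ x] exI[of _ "v @ s"]) simp
qed

lemma free_eq_context: "free_eq a b \<Longrightarrow> free_eq (p @ a @ s) (p @ b @ s)"
  unfolding free_eq_def
proof (induction rule: rtrancl_induct)
  case (step y z)
  then have "(p @ y @ s, p @ z @ s) \<in> free_red1 \<union> free_red1\<inverse>"
    using free_red1_context by blast
  with step.IH show ?case
    by (rule rtrancl_into_rtrancl)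
qed simp

lemma free_eq_append: "free_eq a b \<Longrightarrow> free_eq c d \<Longrightarrow> free_eq (a @ c) (b @ d)"
  using free_eq_context[of a b "[]" c] free_eq_context[of c d b "[]"]
  by (auto intro: free_eq_trans)

lemma free_eq_append_inv_word: "free_eq (u @ inv_word u) []"
proof (induction u)
  case (Cons x u)
  have "free_eq ((x # u) @ inv_word (x # u)) ([x] @ (u @ inv_word u) @ [inv_letter x])"
    by simp
  also have "free_eq \<dots> ([x] @ [] @ [inv_letter x])"
    using free_eq_context[OF Cons] .
  also have "free_eq \<dots> []"
    using free_eq_cancel[of "[]" x "[]"] by simp
  finally show ?case .
qed simp

lemma free_eq_cancel_word: "free_eq (a @ b @ inv_word b @ c) (a @ c)"
  using free_eq_context[OF free_eq_append_inv_word[of b], of a c] by simp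

lemma free_eq_cancel_inv_word: "free_eq (a @ inv_word b @ b @ c) (a @ c)"
  using free_eq_cancel_word[of a "inv_word b" c] by simp

lemma free_red1_inv_word:
  assumes "(a, b) \<in> free_red1"
  shows "(inv_word a, inv_word b) \<in> free_red1"
proof -
  obtain u x v where "a = u @ [x, inv_letter x] @ v" "b = u @ v"
    using assms by (auto simp: free_red1_def)
  then show ?thesis
    unfolding free_red1_def
    by (intro CollectI exI[of _ "inv_word v"] exI[of _ x] exI[of _ "inv_word u"]) simp
qed

lemma free_eq_inv_word: "free_eq a b \<Longrightarrow> free_eq (inv_word a) (inv_word b)"
  unfolding free_eq_def
proof (induction rule: rtrancl_induct)
  case (step y z)
  then have "(inv_word y, inv_word z) \<in> free_red1 \<union> free_red1\<inverse>"
    using free_red1_inv_word by blast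
  with step.IH show ?case
    by (rule rtrancl_into_rtrancl)
qed simp

subsection \<open>Van Kampen areas\<close>

definition has_area :: "'a set \<Rightarrow> 'a letter list set \<Rightarrow> nat \<Rightarrow> 'a letter list \<Rightarrow> bool" where
  "has_area A R k w \<longleftrightarrow> (\<exists>ts. length ts \<le> k \<and> valid_conjs A R ts \<and> free_eq w (conj_prod ts))"

lemma conj_prod_Nil [simp]: "conj_prod [] = []"
  by (simp add: conj_prod_def)

lemma conj_prod_Cons:
  "conj_prod ((v, r, e) # ts) = (v @ (if e then r else inv_word r) @ inv_word v) @ conj_prod ts"
  by (simp add: conj_prod_def)

lemma conj_prod_append [simp]: "conj_prod (ts1 @ ts2) = conj_prod ts1 @ conj_prod ts2"
  by (simp add: conj_prod_def)

lemma valid_conjs_iff: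
  "valid_conjs A R ts \<longleftrightarrow> (\<forall>v r e. (v, r, e) \<in> set ts \<longrightarrow> v \<in> lists (gens A) \<and> r \<in> R)"
  unfolding valid_conjs_def by fastforce

lemma valid_conjs_append [simp]:
  "valid_conjs A R (ts1 @ ts2) \<longleftrightarrow> valid_conjs A R ts1 \<and> valid_conjs A R ts2"
  unfolding valid_conjs_iff set_append Un_iff by blast

lemma inv_word_conj_prod:
  "inv_word (conj_prod ts) = conj_prod (rev (map (\<lambda>(v, r, e). (v, r, \<not> e)) ts))"
  by (induction ts) (auto simp: conj_prod_Cons)

lemma conj_conj_prod:
  "free_eq (p @ conj_prod ts @ inv_word p) (conj_prod (map (\<lambda>(v, r, e). (p @ v, r, e)) ts))"
proof (induction ts)
  case (Cons t ts)
  obtain v r e where t: "t = (v, r, e)"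
    by (cases t)
  define x where "x = p @ v @ (if e then r else inv_word r) @ inv_word v"
  have "p @ conj_prod (t # ts) @ inv_word p = x @ conj_prod ts @ inv_word p"
    by (simp add: t x_def conj_prod_Cons)
  also have "free_eq \<dots> (x @ inv_word p @ p @ conj_prod ts @ inv_word p)"
    using free_eq_sym[OF free_eq_cancel_inv_word] .
  also have "free_eq \<dots> ((x @ inv_word p) @ conj_prod (map (\<lambda>(v, r, e). (p @ v, r, e)) ts))"
    using free_eq_context[OF Cons, of "x @ inv_word p" "[]"] by simp
  also have "\<dots> = conj_prod (map (\<lambda>(v, r, e). (p @ v, r, e)) (t # ts))"
    by (simp add: t x_def conj_prod_Cons)
  finally show ?case .
qed (use free_eq_append_inv_word in simp)

lemma has_area_free_eq: "has_area A R k w \<Longrightarrow> free_eq w w' \<Longrightarrow> has_area A R k w'"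
  unfolding has_area_def by (meson free_eq_sym free_eq_trans)

lemma has_area_mono: "has_area A R k w \<Longrightarrow> k \<le> k' \<Longrightarrow> has_area A R k' w"
  unfolding has_area_def by (meson order_trans)

lemma has_area_Nil: "has_area A R 0 []"
  unfolding has_area_def by (rule exI[of _ "[]"]) (simp add: valid_conjs_def)

lemma has_area_append:
  assumes "has_area A R k1 a" and "has_area A R k2 b"
  shows "has_area A R (k1 + k2) (a @ b)"
proof -
  obtain ts1 ts2 where "length ts1 \<le> k1" "valid_conjs A R ts1" "free_eq a (conj_prod ts1)"
    and "length ts2 \<le> k2" "valid_conjs A R ts2" "free_eq b (conj_prod ts2)"
    using assms unfolding has_area_def by blast
  then show ?thesis
    unfolding has_area_def by (intro exI[of _ "ts1 @ ts2"]) (auto intro: free_eq_append)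
qed

lemma has_area_inv_word:
  assumes "has_area A R k a"
  shows "has_area A R k (inv_word a)"
proof -
  obtain ts where "length ts \<le> k" "valid_conjs A R ts" "free_eq a (conj_prod ts)"
    using assms unfolding has_area_def by blast
  then show ?thesis
    unfolding has_area_def
    by (intro exI[of _ "rev (map (\<lambda>(v, r, e). (v, r, \<not> e)) ts)"])
      (auto simp: valid_conjs_iff inv_word_conj_prod[symmetric] intro: free_eq_inv_word)
qed

lemma has_area_conj:
  assumes p: "p \<in> lists (gens A)" and "has_area A R k a"
  shows "has_area A R k (p @ a @ inv_word p)"
proof -
  obtain ts where "length ts \<le> k" "valid_conjs A R ts" "free_eq a (conj_prod ts)"
    using assms unfolding has_area_def by blast
  moreover have "free_eq (p @ conj_prod ts @ inv_word p) (conj_prod (map (\<lambda>(v, r, e). (p @ v, r, e)) ts))"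
    by (rule conj_conj_prod)
  ultimately show ?thesis
    unfolding has_area_def using p
    by (intro exI[of _ "map (\<lambda>(v, r, e). (p @ v, r, e)) ts"])
      (fastforce simp: valid_conjs_iff intro: free_eq_trans free_eq_context)
qed

lemma has_area_unconj:
  assumes "p \<in> lists (gens A)" and "has_area A R k (p @ a @ inv_word p)"
  shows "has_area A R k a"
proof -
  have "has_area A R k (inv_word p @ (p @ a @ inv_word p) @ inv_word (inv_word p))"
    by (rule has_area_conj) (use assms in simp_all)
  moreover have "free_eq (inv_word p @ (p @ a @ inv_word p) @ inv_word (inv_word p)) a"
  proof -
    have "free_eq (inv_word p @ p @ a @ inv_word p @ p) (a @ inv_word p @ p)"
      using free_eq_cancel_inv_word[of "[]" p] by simp
    also have "free_eq \<dots> a"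
      using free_eq_cancel_inv_word[of a p "[]"] by simp
    finally show ?thesis
      by simp
  qed
  ultimately show ?thesis
    by (rule has_area_free_eq)
qed

lemma has_area_glue:
  assumes Q: "Q \<in> lists (gens A)"
    and "has_area A R k1 (P @ x @ inv_word Q)" and "has_area A R k2 (inv_word x @ m)"
  shows "has_area A R (k1 + k2) (P @ m @ inv_word Q)"
proof -
  have "has_area A R (k1 + k2) ((P @ x @ inv_word Q) @ Q @ (inv_word x @ m) @ inv_word Q)"
    using assms by (intro has_area_append has_area_conj)
  moreover have "free_eq ((P @ x) @ inv_word Q @ Q @ (inv_word x @ m @ inv_word Q))
                         (P @ x @ inv_word x @ m @ inv_word Q)"
    using free_eq_cancel_inv_word[of "P @ x" Q] by simp
  moreover have "free_eq (P @ x @ inv_word x @ m @ inv_word Q) (P @ m @ inv_word Q)"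
    using free_eq_cancel_word .
  ultimately show ?thesis
    by (auto intro: has_area_free_eq free_eq_trans)
qed

lemma trivial_word_iff_has_area: "trivial_word A R w \<longleftrightarrow> (\<exists>k. has_area A R k w)"
  unfolding trivial_word_def has_area_def by blast

lemma area_le: "has_area A R k w \<Longrightarrow> area A R w \<le> k"
  unfolding has_area_def area_def
  by (elim exE conjE, rule order_trans[OF Least_le]) auto

lemma has_area_area: "trivial_word A R w \<Longrightarrow> has_area A R (area A R w) w"
  unfolding trivial_word_def has_area_def area_def
  by (rule LeastI2_ex) auto

lemma trivial_word_free_eq: "trivial_word A R w \<Longrightarrow> free_eq w w' \<Longrightarrow> trivial_word A R w'"
  unfolding trivial_word_iff_has_area by (meson has_area_free_eq)

lemma trivial_word_append:
  "trivial_word A R a \<Longrightarrow> trivial_word A R b \<Longrightarrow> trivial_word A R (a @ b)"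
  unfolding trivial_word_iff_has_area by (meson has_area_append)

lemma trivial_word_inv_word: "trivial_word A R a \<Longrightarrow> trivial_word A R (inv_word a)"
  unfolding trivial_word_iff_has_area by (meson has_area_inv_word)

lemma trivial_word_unconj:
  "p \<in> lists (gens A) \<Longrightarrow> trivial_word A R (p @ a @ inv_word p) \<Longrightarrow> trivial_word A R a"
  unfolding trivial_word_iff_has_area by (meson has_area_unconj)

lemma trivial_word_Nil: "trivial_word A R []"
  unfolding trivial_word_iff_has_area by (meson has_area_Nil)

lemma trivial_word_cell:
  assumes Q: "Q \<in> lists (gens A)"
    and "trivial_word A R (P @ x @ inv_word Q)" and "trivial_word A R (P @ m @ inv_word Q)"
  shows "trivial_word A R (inv_word x @ m)"
proof -
  have "trivial_word A R (inv_word (P @ x @ inv_word Q) @ (P @ m @ inv_word Q))"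
    using assms(2,3) by (rule trivial_word_append[OF trivial_word_inv_word])
  then have "trivial_word A R ((Q @ inv_word x) @ inv_word P @ P @ (m @ inv_word Q))"
    by simp
  then have "trivial_word A R (Q @ (inv_word x @ m) @ inv_word Q)"
    using trivial_word_free_eq free_eq_cancel_inv_word by fastforce
  then show ?thesis
    by (rule trivial_word_unconj[OF Q])
qed

definition group_eq :: "'a set \<Rightarrow> 'a letter list set \<Rightarrow> 'a letter list \<Rightarrow> 'a letter list \<Rightarrow> bool" where
  "group_eq A R u v \<longleftrightarrow> trivial_word A R (u @ inv_word v)"

lemma free_eq_imp_group_eq:
  assumes "free_eq u v"
  shows "group_eq A R u v"
proof -
  have "free_eq (v @ inv_word v) (u @ inv_word v)"
    using free_eq_context[OF free_eq_sym[OF assms], of "[]" "inv_word v"] by simp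
  then show ?thesis
    unfolding group_eq_def
    by (meson trivial_word_free_eq trivial_word_Nil free_eq_sym free_eq_append_inv_word)
qed

lemma group_eq_refl [simp]: "group_eq A R u u"
  by (rule free_eq_imp_group_eq) simp

lemma group_eq_sym: "group_eq A R u v \<Longrightarrow> group_eq A R v u"
  unfolding group_eq_def using trivial_word_inv_word by fastforce

lemma group_eq_trans: "group_eq A R u v \<Longrightarrow> group_eq A R v w \<Longrightarrow> group_eq A R u w"
  unfolding group_eq_def
  by (metis append_assoc trivial_word_append trivial_word_free_eq free_eq_cancel_inv_word)

lemma group_eq_append_right: "group_eq A R u v \<Longrightarrow> group_eq A R (u @ c) (v @ c)"
  unfolding group_eq_def
  using trivial_word_free_eq[OF _ free_eq_sym[OF free_eq_cancel_word[of u c "inv_word v"]]] by simp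

lemma group_eq_cancel_right: "group_eq A R (u @ c) (v @ c) \<Longrightarrow> group_eq A R u v"
  unfolding group_eq_def
  using trivial_word_free_eq[OF _ free_eq_cancel_word[of u c "inv_word v"]] by simp

lemma group_eq_move_right:
  assumes "group_eq A R (a @ b) (c @ d)"
  shows "group_eq A R (a @ b @ inv_word d) c"
proof -
  have "group_eq A R (a @ b @ inv_word d) (c @ d @ inv_word d)"
    using group_eq_append_right[OF assms, of "inv_word d"] by simp
  moreover have "group_eq A R (c @ d @ inv_word d) c"
    using free_eq_imp_group_eq[OF free_eq_cancel_word[of c d "[]"]] by simp
  ultimately show ?thesis
    by (rule group_eq_trans)
qed

lemma mem_elem_iff: "v \<in> elem A R u \<longleftrightarrow> v \<in> lists (gens A) \<and> group_eq A R u v"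
  by (simp add: elem_def group_eq_def)

lemma elem_eq_iff:
  assumes "u \<in> lists (gens A)" and "v \<in> lists (gens A)"
  shows "elem A R u = elem A R v \<longleftrightarrow> group_eq A R u v"
  using assms unfolding set_eq_iff mem_elem_iff
  by (meson group_eq_refl group_eq_sym group_eq_trans)

lemma elem_self: "u \<in> lists (gens A) \<Longrightarrow> u \<in> elem A R u"
  by (simp add: mem_elem_iff)

definition dehn_nat :: "'a set \<Rightarrow> 'a letter list set \<Rightarrow> nat \<Rightarrow> nat" where
  "dehn_nat A R n = Max {area A R w | w. w \<in> lists (gens A) \<and> length w \<le> n \<and> trivial_word A R w}"

lemma dehn_eq_dehn_nat: "dehn A R = (\<lambda>n. real (dehn_nat A R n))"
  by (simp add: fun_eq_iff dehn_def dehn_nat_def)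

lemma finite_words_le: "finite A \<Longrightarrow> finite {w. w \<in> lists (gens A) \<and> length w \<le> n}"
  using finite_lists_length_le[of "gens A" n] by (simp add: gens_def lists_eq_set)

lemma finite_areas:
  assumes "finite A"
  shows "finite {area A R w | w. w \<in> lists (gens A) \<and> length w \<le> n \<and> trivial_word A R w}"
proof -
  have "{area A R w | w. w \<in> lists (gens A) \<and> length w \<le> n \<and> trivial_word A R w}
        \<subseteq> area A R ` {w. w \<in> lists (gens A) \<and> length w \<le> n}"
    by blast
  then show ?thesis
    using finite_words_le[OF assms] finite_subset by blast
qed

lemma dehn_nat_attained:
  assumes "finite A"
  obtains w where "w \<in> lists (gens A)" "length w \<le> n" "trivial_word A R w"
    "dehn_nat A R n = area A R w"
proof -
  have "dehn_nat A R n \<in> {area A R w | w. w \<in> lists (gens A) \<and> length w \<le> n \<and> trivial_word A R w}"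
    unfolding dehn_nat_def using finite_areas[OF assms] trivial_word_Nil[of A R]
    by (intro Max_in) (auto intro!: exI[of _ "[]"])
  then show ?thesis
    using that by blast
qed

lemma area_le_dehn_nat:
  assumes "finite A" "w \<in> lists (gens A)" "length w \<le> n" "trivial_word A R w"
  shows "area A R w \<le> dehn_nat A R n"
  unfolding dehn_nat_def using assms finite_areas[OF assms(1)] by (intro Max_ge) auto

lemma has_area_dehn_nat:
  assumes "finite A" "w \<in> lists (gens A)" "length w \<le> n" "trivial_word A R w"
  shows "has_area A R (dehn_nat A R n) w"
  using has_area_mono[OF has_area_area[OF assms(4)] area_le_dehn_nat[OF assms]] .

lemma dehn_nat_mono:
  assumes "finite A" "m \<le> n"
  shows "dehn_nat A R m \<le> dehn_nat A R n"
proof -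
  obtain w where "w \<in> lists (gens A)" "length w \<le> m" "trivial_word A R w" "dehn_nat A R m = area A R w"
    using dehn_nat_attained[OF assms(1)] .
  then show ?thesis
    using area_le_dehn_nat[OF assms(1), of w n R] assms(2) by simp
qed

lemma has_area_glue_dehn_nat:
  assumes "finite A" and Q: "Q \<in> lists (gens A)"
    and "has_area A R k (P @ x @ inv_word Q)" and "trivial_word A R (P @ m @ inv_word Q)"
    and "x \<in> lists (gens A)" "m \<in> lists (gens A)" and "length x + length m \<le> n"
  shows "has_area A R (k + dehn_nat A R n) (P @ m @ inv_word Q)"
proof (rule has_area_glue[OF Q assms(3)])
  have "trivial_word A R (inv_word x @ m)"
    using trivial_word_cell[OF Q] assms(3,4) trivial_word_iff_has_area by blast
  then show "has_area A R (dehn_nat A R n) (inv_word x @ m)"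
    using assms by (intro has_area_dehn_nat) auto
qed

text \<open>The strip between two words \<open>u\<close>, \<open>v\<close> whose prefixes are joined by short rungs \<open>x t\<close>
  is a row of cells of perimeter at most \<open>2 B + 2\<close>.\<close>

lemma has_area_ladder:
  assumes "finite A" and u: "u \<in> lists (gens A)" and v: "v \<in> lists (gens A)" and "x 0 = []"
    and x: "\<And>t. x t \<in> lists (gens A) \<and> length (x t) \<le> B \<and> group_eq A R (take t u @ x t) (take t v)"
  shows "has_area A R (t * dehn_nat A R (2 * B + 2)) (take t u @ x t @ inv_word (take t v))"
proof (induction t)
  case 0
  then show ?case
    using \<open>x 0 = []\<close> has_area_Nil by simp
next
  case (Suc t)
  define \<alpha> where "\<alpha> = take 1 (drop t u)"
  define \<beta> where "\<beta> = take 1 (drop t v)"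
  have u_Suc: "take (Suc t) u = take t u @ \<alpha>" and v_Suc: "take (Suc t) v = take t v @ \<beta>"
    using take_add[of t 1 u] take_add[of t 1 v] by (simp_all add: \<alpha>_def \<beta>_def)
  have "has_area A R (t * dehn_nat A R (2 * B + 2) + dehn_nat A R (2 * B + 2))
          (take t u @ (\<alpha> @ x (Suc t) @ inv_word \<beta>) @ inv_word (take t v))"
  proof (rule has_area_glue_dehn_nat[OF \<open>finite A\<close> take_in_lists[OF v] Suc.IH])
    show "trivial_word A R (take t u @ (\<alpha> @ x (Suc t) @ inv_word \<beta>) @ inv_word (take t v))"
      using x[of "Suc t"] by (simp add: group_eq_def u_Suc v_Suc)
    show "x t \<in> lists (gens A)" "\<alpha> @ x (Suc t) @ inv_word \<beta> \<in> lists (gens A)"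
      using x u v by (simp_all add: \<alpha>_def \<beta>_def take_in_lists drop_in_lists)
    show "length (x t) + length (\<alpha> @ x (Suc t) @ inv_word \<beta>) \<le> 2 * B + 2"
      using x[of t] x[of "Suc t"] by (simp add: \<alpha>_def \<beta>_def min_def)
  qed
  then show ?case
    by (simp add: u_Suc v_Suc add.commute)
qed

lemma has_area_telescope:
  assumes "\<And>i. i < length w \<Longrightarrow> has_area A R K (c i @ [w ! i] @ inv_word (c (Suc i)))"
  shows "has_area A R (length w * K) (c 0 @ w @ inv_word (c (length w)))"
proof -
  have "has_area A R (i * K) (c 0 @ take i w @ inv_word (c i))" if "i \<le> length w" for i
    using that
  proof (induction i)
    case 0
    then show ?case
      using has_area_free_eq[OF has_area_Nil free_eq_sym[OF free_eq_append_inv_word[of "c 0"]]]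
      by simp
  next
    case (Suc i)
    then have "has_area A R (i * K + K)
        ((c 0 @ take i w) @ inv_word (c i) @ c i @ ([w ! i] @ inv_word (c (Suc i))))"
      using has_area_append[OF Suc.IH assms, of i] by simp
    then have "has_area A R (i * K + K) ((c 0 @ take i w) @ [w ! i] @ inv_word (c (Suc i)))"
      using has_area_free_eq free_eq_cancel_inv_word by blast
    then show ?case
      using Suc.prems by (simp add: take_Suc_conv_app_nth add.commute)
  qed
  from this[of "length w"] show ?thesis
    by simp
qed

subsection \<open>Regular languages and convolutions\<close>

definition bounded_completion :: "nat \<Rightarrow> 'b list set \<Rightarrow> bool" where
  "bounded_completion S X \<longleftrightarrow> (\<forall>p z. p @ z \<in> X \<longrightarrow> (\<exists>z'. length z' \<le> S \<and> p @ z' \<in> X))"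

lemma bounded_completion_mono: "bounded_completion S X \<Longrightarrow> S \<le> S' \<Longrightarrow> bounded_completion S' X"
  unfolding bounded_completion_def using order_trans by blast

text \<open>Pumping down: two prefixes of the suffix reaching the same state can be spliced out.\<close>

lemma regular_lang_shorten_suffix:
  assumes "regular_lang X"
  obtains S where "\<And>p z. p @ z \<in> X \<Longrightarrow> S < length z \<Longrightarrow> \<exists>z'. length z' < length z \<and> p @ z' \<in> X"
proof -
  obtain \<delta> :: "nat \<Rightarrow> _ \<Rightarrow> nat" and q0 Fin where fin: "finite (range (foldl \<delta> q0))"
    and X: "X = {w. foldl \<delta> q0 w \<in> Fin}"
    using assms unfolding regular_lang_def by blast
  define N where "N = card (range (foldl \<delta> q0))"
  have "\<exists>z'. length z' < length z \<and> p @ z' \<in> X" if pz: "p @ z \<in> X" and long: "N < length z" for p z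
  proof -
    define f where "f j = foldl \<delta> q0 (p @ take j z)" for j
    have "card (f ` {..N}) \<le> N"
      unfolding N_def f_def by (intro card_mono[OF fin]) blast
    then have "\<not> inj_on f {..N}"
      by (intro pigeonhole) simp
    then obtain j k where "j \<le> N" "k \<le> N" "j \<noteq> k" "f j = f k"
      unfolding inj_on_def by auto
    then obtain j k where jk: "j < k" "k \<le> N" "f j = f k"
      by (metis linorder_neqE_nat)
    define z' where "z' = take j z @ drop k z"
    have "foldl \<delta> q0 (p @ z') = foldl \<delta> (f k) (drop k z)"
      using jk(3) by (simp add: z'_def f_def)
    also have "\<dots> = foldl \<delta> q0 (p @ z)"
      by (simp add: f_def flip: foldl_append)
    finally show ?thesis
      using pz jk long X by (intro exI[of _ z']) (simp add: z'_def)
  qed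
  then show ?thesis
    using that by blast
qed

lemma regular_lang_bounded_completion:
  assumes "regular_lang X"
  obtains S where "bounded_completion S X"
proof -
  obtain S where shorten: "\<And>p z. p @ z \<in> X \<Longrightarrow> S < length z \<Longrightarrow> \<exists>z'. length z' < length z \<and> p @ z' \<in> X"
    using regular_lang_shorten_suffix[OF assms] by blast
  have "\<exists>z'. length z' \<le> S \<and> p @ z' \<in> X" if "p @ z \<in> X" for p z
    using that
  proof (induction z rule: length_induct)
    case (1 z)
    show ?case
    proof (cases "S < length z")
      case True
      then obtain z' where "length z' < length z" "p @ z' \<in> X"
        using shorten 1 by blast
      then show ?thesis
        using 1 by blast
    qed (use 1 in \<open>auto simp: not_less\<close>)
  qed
  then show ?thesis
    using that unfolding bounded_completion_def by blast
qed

lemma length_conv [simp]: "length (conv u v) = max (length u) (length v)"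
  by (simp add: conv_def)

lemma nth_opt_eqI:
  assumes eq: "\<And>i. nth_opt u i = nth_opt v i"
  shows "u = v"
proof (rule nth_equalityI)
  show "length u = length v"
    using eq[of "length u"] eq[of "length v"] by (auto simp: nth_opt_def split: if_splits)
  then show "u ! i = v ! i" if "i < length u" for i
    using eq[of i] that by (simp add: nth_opt_def)
qed

lemma nth_conv: "i < max (length u) (length v) \<Longrightarrow> conv u v ! i = (nth_opt u i, nth_opt v i)"
  by (simp add: conv_def)

lemma take_conv: "take t (conv u v) = conv (take t u) (take t v)"
  by (rule nth_equalityI) (auto simp: conv_def nth_opt_def min_max_distrib2)

lemma conv_inject [simp]: "conv u v = conv u' v' \<longleftrightarrow> u = u' \<and> v = v'"
proof
  assume eq: "conv u v = conv u' v'"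
  then have len: "max (length u) (length v) = max (length u') (length v')"
    by (metis length_conv)
  have nth: "nth_opt u i = nth_opt u' i \<and> nth_opt v i = nth_opt v' i" for i
  proof (cases "i < max (length u) (length v)")
    case True
    then show ?thesis
      using arg_cong[OF eq, of "\<lambda>c. c ! i"] len by (simp add: nth_conv)
  qed (use len in \<open>auto simp: nth_opt_def less_max_iff_disj\<close>)
  show "u = u' \<and> v = v'"
    using nth nth_opt_eqI[of u u'] nth_opt_eqI[of v v'] by blast
qed simp

lemma map_swap_conv: "map prod.swap (conv u v) = conv v u"
  by (simp add: conv_def max.commute)

lemma bounded_completion_conv_converse:
  assumes "bounded_completion S (case_prod conv ` Rel)"
  shows "bounded_completion S (case_prod conv ` Rel\<inverse>)"
  unfolding bounded_completion_def
proof (intro allI impI)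
  fix p z
  assume "p @ z \<in> case_prod conv ` Rel\<inverse>"
  then obtain a b where ab: "(a, b) \<in> Rel" "p @ z = conv b a"
    by auto
  have "map prod.swap p @ map prod.swap z = conv a b"
    using arg_cong[OF ab(2), of "map prod.swap"] by (simp add: map_swap_conv)
  then have "map prod.swap p @ map prod.swap z \<in> case_prod conv ` Rel"
    using ab(1) by (auto intro: rev_image_eqI)
  then obtain z' where z': "length z' \<le> S" "map prod.swap p @ z' \<in> case_prod conv ` Rel"
    using assms unfolding bounded_completion_def by blast
  then obtain a' b' where ab': "(a', b') \<in> Rel" "map prod.swap p @ z' = conv a' b'"
    by auto
  have "p @ map prod.swap z' = conv b' a'"
    using arg_cong[OF ab'(2), of "map prod.swap"] by (simp add: map_swap_conv comp_def)
  then show "\<exists>z'. length z' \<le> S \<and> p @ z' \<in> case_prod conv ` Rel\<inverse>"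
    using z'(1) ab'(1) by (intro exI[of _ "map prod.swap z'"]) (auto intro: rev_image_eqI)
qed

lemma conv_completion:
  assumes "bounded_completion S (case_prod conv ` Rel)" and uv: "(u, v) \<in> Rel"
    and t: "t \<le> max (length u) (length v)"
  obtains u' v' where "(u', v') \<in> Rel" "take t u' = take t u" "take t v' = take t v"
    "max (length u') (length v') \<le> t + S"
proof -
  have "take t (conv u v) @ drop t (conv u v) \<in> case_prod conv ` Rel"
    using uv by (simp add: rev_image_eqI)
  then obtain z' where z': "length z' \<le> S" "take t (conv u v) @ z' \<in> case_prod conv ` Rel"
    using assms(1) unfolding bounded_completion_def by blast
  then obtain u' v' where uv': "(u', v') \<in> Rel" "conv u' v' = take t (conv u v) @ z'"
    by auto
  have len: "length (take t (conv u v)) = t"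
    using t by simp
  have "take t (conv u' v') = take t (conv u v)"
    unfolding uv'(2) using len by simp
  then have "take t u' = take t u" "take t v' = take t v"
    by (simp_all add: take_conv)
  moreover have "max (length u') (length v') \<le> t + S"
    using arg_cong[OF uv'(2), of length] len z'(1) by simp
  ultimately show ?thesis
    by (rule that[OF uv'(1)])
qed

lemma conv_length_le:
  assumes "bounded_completion S (case_prod conv ` Rel)" and "single_valued Rel"
    and uv: "(u, v) \<in> Rel"
  shows "length v \<le> length u + S + 1"
proof (rule ccontr)
  assume long: "\<not> ?thesis"
  then have "length u + 1 \<le> max (length u) (length v)"
    by simp
  then obtain u' v' where uv': "(u', v') \<in> Rel" "take (length u + 1) u' = take (length u + 1) u"
    "take (length u + 1) v' = take (length u + 1) v" "max (length u') (length v') \<le> length u + 1 + S"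
    by (rule conv_completion[OF assms(1) uv])
  then have take_u': "take (length u + 1) u' = u"
    by simp
  have "length u' = length u"
    using arg_cong[OF take_u', of length] by (simp add: min_def split: if_splits)
  then have "u' = u"
    using take_u' by simp
  then have "v' = v"
    using assms(2) uv uv'(1) by (auto dest: single_valuedD)
  then show False
    using uv'(4) long by simp
qed

subsection \<open>Cayley automatic representations\<close>

locale cayley_automatic_rep =
  fixes A :: "'a set" and R :: "'a letter list set" and L :: "'a letter list set"
    and \<psi> :: "'a letter list \<Rightarrow> 'a letter list set"
  assumes finite_A: "finite A" and cayley_automatic: "cayley_automatic A R L \<psi>"
begin

lemma L_lists: "L \<subseteq> lists (gens A)"
  and bij_psi: "bij_betw \<psi> L (grp A R)"
  using cayley_automatic by (auto simp: cayley_automatic_def)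

definition mult_rel :: "'a \<Rightarrow> ('a letter list \<times> 'a letter list) set" where
  "mult_rel a = {(u, v). u \<in> L \<and> v \<in> L \<and> (\<exists>x \<in> \<psi> u. \<psi> v = elem A R (x @ [(a, True)]))}"

lemma regular_mult_rel: "a \<in> A \<Longrightarrow> regular_lang (case_prod conv ` mult_rel a)"
  using cayley_automatic unfolding cayley_automatic_def fa_recognizable_def mult_rel_def by blast

lemma psi_eq_elem:
  assumes "u \<in> L" and x: "x \<in> \<psi> u"
  shows "x \<in> lists (gens A) \<and> \<psi> u = elem A R x"
proof -
  obtain y where y: "y \<in> lists (gens A)" "\<psi> u = elem A R y"
    using assms(1) bij_psi unfolding bij_betw_def grp_def by blast
  with x have "x \<in> lists (gens A)" "group_eq A R y x"
    by (auto simp: mem_elem_iff)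
  then show ?thesis
    using y by (simp add: elem_eq_iff)
qed

lemma mult_rel_D:
  assumes "(u, v) \<in> mult_rel a"
  obtains x where "u \<in> L" "v \<in> L" "x \<in> lists (gens A)" "\<psi> u = elem A R x"
    "\<psi> v = elem A R (x @ [(a, True)])"
proof -
  obtain x where "u \<in> L" "v \<in> L" "x \<in> \<psi> u" "\<psi> v = elem A R (x @ [(a, True)])"
    using assms by (auto simp: mult_rel_def)
  moreover have "x \<in> lists (gens A)" "\<psi> u = elem A R x"
    using psi_eq_elem[OF \<open>u \<in> L\<close> \<open>x \<in> \<psi> u\<close>] by auto
  ultimately show ?thesis
    using that by blast
qed

lemma letter_in_lists: "a \<in> A \<Longrightarrow> [(a, b)] \<in> lists (gens A)"
  by (simp add: gens_def)

lemma psi_inject: "u \<in> L \<Longrightarrow> v \<in> L \<Longrightarrow> \<psi> u = \<psi> v \<Longrightarrow> u = v"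
  using inj_onD[OF bij_betw_imp_inj_on[OF bij_psi]] by blast

lemma elem_append_letter_eq_iff:
  assumes "a \<in> A" "x \<in> lists (gens A)" "x' \<in> lists (gens A)"
  shows "elem A R (x @ [(a, True)]) = elem A R (x' @ [(a, True)]) \<longleftrightarrow> elem A R x = elem A R x'"
proof -
  have "elem A R (x @ [(a, True)]) = elem A R (x' @ [(a, True)]) \<longleftrightarrow>
        group_eq A R (x @ [(a, True)]) (x' @ [(a, True)])"
    by (rule elem_eq_iff) (use assms letter_in_lists[OF assms(1)] in simp_all)
  also have "\<dots> \<longleftrightarrow> group_eq A R x x'"
    by (blast intro: group_eq_append_right group_eq_cancel_right)
  also have "\<dots> \<longleftrightarrow> elem A R x = elem A R x'"
    using assms(2,3) by (simp add: elem_eq_iff)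
  finally show ?thesis .
qed

lemma single_valued_mult_rel: "a \<in> A \<Longrightarrow> single_valued (mult_rel a)"
proof (rule single_valuedI)
  fix u v v' assume a: "a \<in> A" and uv: "(u, v) \<in> mult_rel a" and uv': "(u, v') \<in> mult_rel a"
  obtain x where x: "u \<in> L" "v \<in> L" "x \<in> lists (gens A)" "\<psi> u = elem A R x"
    "\<psi> v = elem A R (x @ [(a, True)])"
    by (rule mult_rel_D[OF uv])
  obtain x' where x': "u \<in> L" "v' \<in> L" "x' \<in> lists (gens A)" "\<psi> u = elem A R x'"
    "\<psi> v' = elem A R (x' @ [(a, True)])"
    by (rule mult_rel_D[OF uv'])
  have "\<psi> v = \<psi> v'"
    using x(4,5) x'(4,5) elem_append_letter_eq_iff[OF a x(3) x'(3)] by simp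
  then show "v = v'"
    using psi_inject x(2) x'(2) by blast
qed

lemma single_valued_converse_mult_rel: "a \<in> A \<Longrightarrow> single_valued ((mult_rel a)\<inverse>)"
proof (rule single_valuedI)
  fix v u u' assume a: "a \<in> A" and "(v, u) \<in> (mult_rel a)\<inverse>" "(v, u') \<in> (mult_rel a)\<inverse>"
  then have uv: "(u, v) \<in> mult_rel a" and uv': "(u', v) \<in> mult_rel a"
    by simp_all
  obtain x where x: "u \<in> L" "v \<in> L" "x \<in> lists (gens A)" "\<psi> u = elem A R x"
    "\<psi> v = elem A R (x @ [(a, True)])"
    by (rule mult_rel_D[OF uv])
  obtain x' where x': "u' \<in> L" "v \<in> L" "x' \<in> lists (gens A)" "\<psi> u' = elem A R x'"
    "\<psi> v = elem A R (x' @ [(a, True)])"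
    by (rule mult_rel_D[OF uv'])
  have "\<psi> u = \<psi> u'"
    using x(4,5) x'(4,5) elem_append_letter_eq_iff[OF a x(3) x'(3)] by simp
  then show "u = u'"
    using psi_inject x(1) x'(1) by blast
qed

definition displacement :: "nat \<Rightarrow> nat" where
  "displacement n = Max (insert 0 {word_dist A R (elem A R w) (\<psi> w) | w. w \<in> L \<and> length w \<le> n})"

lemma ca_function_eq: "ca_function A R L \<psi> = (\<lambda>n. real (displacement n))"
  by (simp add: fun_eq_iff ca_function_def displacement_def)

lemma finite_word_dists: "finite {word_dist A R (elem A R w) (\<psi> w) | w. w \<in> L \<and> length w \<le> n}"
proof -
  have "{word_dist A R (elem A R w) (\<psi> w) | w. w \<in> L \<and> length w \<le> n}
        \<subseteq> (\<lambda>w. word_dist A R (elem A R w) (\<psi> w)) ` {w. w \<in> lists (gens A) \<and> length w \<le> n}"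
    using L_lists by blast
  then show ?thesis
    using finite_words_le[OF finite_A] finite_subset by blast
qed

lemma displacement_mono: "m \<le> n \<Longrightarrow> displacement m \<le> displacement n"
  unfolding displacement_def by (rule Max_mono) (use finite_word_dists in auto)

lemma word_dist_le_displacement:
  "w \<in> L \<Longrightarrow> word_dist A R (elem A R w) (\<psi> w) \<le> displacement (length w)"
  unfolding displacement_def by (rule Max_ge) (use finite_word_dists in auto)

lemma short_path_to_psi:
  assumes "w \<in> L"
  shows "\<exists>e. e \<in> lists (gens A) \<and> length e \<le> displacement (length w) \<and> elem A R (w @ e) = \<psi> w"
proof -
  have w: "w \<in> lists (gens A)"
    using assms L_lists by blast
  obtain y where y: "y \<in> lists (gens A)" "\<psi> w = elem A R y"
    using assms bij_psi unfolding bij_betw_def grp_def by blast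
  let ?P = "\<lambda>k. \<exists>x \<in> lists (gens A). length x = k \<and> (\<exists>y' \<in> elem A R w. elem A R (y' @ x) = \<psi> w)"
  have "elem A R (w @ inv_word w @ y) = \<psi> w"
    using free_eq_imp_group_eq[OF free_eq_cancel_word[of "[]" w y]] y w by (simp add: elem_eq_iff)
  then have "?P (length (inv_word w @ y))"
    using elem_self[OF w] w y by (intro bexI[of _ "inv_word w @ y"]) auto
  then have "?P (word_dist A R (elem A R w) (\<psi> w))"
    unfolding word_dist_def by (rule LeastI)
  then obtain x y' where x: "x \<in> lists (gens A)" "length x = word_dist A R (elem A R w) (\<psi> w)"
    and y': "y' \<in> elem A R w" "elem A R (y' @ x) = \<psi> w"
    by blast
  from y'(1) have "y' \<in> lists (gens A)" "group_eq A R w y'"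
    by (simp_all add: mem_elem_iff)
  then have "elem A R (w @ x) = elem A R (y' @ x)"
    using w x(1) by (simp add: elem_eq_iff group_eq_append_right)
  then show ?thesis
    using x y' word_dist_le_displacement[OF assms] by (intro exI[of _ x]) simp
qed

definition displacement_word :: "'a letter list \<Rightarrow> 'a letter list" where
  "displacement_word w = (SOME e. e \<in> lists (gens A) \<and> length e \<le> displacement (length w) \<and> elem A R (w @ e) = \<psi> w)"

lemma displacement_word:
  assumes "w \<in> L"
  shows "displacement_word w \<in> lists (gens A)" "length (displacement_word w) \<le> displacement (length w)"
    "elem A R (w @ displacement_word w) = \<psi> w"
  using someI_ex[OF short_path_to_psi[OF assms]] unfolding displacement_word_def by blast+

lemma mult_rel_group_eq:
  assumes a: "a \<in> A" and "(u, v) \<in> mult_rel a"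
  shows "group_eq A R (u @ displacement_word u @ [(a, True)]) (v @ displacement_word v)"
proof -
  obtain x where "u \<in> L" "v \<in> L" and x: "x \<in> lists (gens A)" "\<psi> u = elem A R x"
    "\<psi> v = elem A R (x @ [(a, True)])"
    using mult_rel_D[OF assms(2)] .
  then have "u \<in> lists (gens A)" "v \<in> lists (gens A)"
    using L_lists by auto
  note dw = displacement_word[OF \<open>u \<in> L\<close>] displacement_word[OF \<open>v \<in> L\<close>]
  have "group_eq A R (u @ displacement_word u) x"
    using dw x \<open>u \<in> lists (gens A)\<close> by (simp add: elem_eq_iff)
  then have "group_eq A R (u @ displacement_word u @ [(a, True)]) (x @ [(a, True)])"
    using group_eq_append_right by fastforce
  moreover have "group_eq A R (v @ displacement_word v) (x @ [(a, True)])"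
    using dw x \<open>v \<in> lists (gens A)\<close> letter_in_lists[OF a] by (simp add: elem_eq_iff)
  ultimately show ?thesis
    by (meson group_eq_sym group_eq_trans)
qed

lemma ex_completion_bound: "\<exists>S. \<forall>a\<in>A. bounded_completion S (case_prod conv ` mult_rel a)"
proof -
  have "\<forall>a\<in>A. \<exists>S. bounded_completion S (case_prod conv ` mult_rel a)"
    by (meson regular_lang_bounded_completion regular_mult_rel)
  then obtain S where "\<forall>a\<in>A. bounded_completion (S a) (case_prod conv ` mult_rel a)"
    by metis
  then have "\<forall>a\<in>A. bounded_completion (sum S A) (case_prod conv ` mult_rel a)"
    using bounded_completion_mono member_le_sum[OF _ _ finite_A] by blast
  then show ?thesis ..
qed

definition completion_bound :: nat where
  "completion_bound = (SOME S. \<forall>a\<in>A. bounded_completion S (case_prod conv ` mult_rel a))"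

lemma bounded_completion_mult_rel:
  "a \<in> A \<Longrightarrow> bounded_completion completion_bound (case_prod conv ` mult_rel a)"
  using someI_ex[OF ex_completion_bound] unfolding completion_bound_def by blast

lemma mult_rel_length_le:
  assumes "a \<in> A" and "(u, v) \<in> mult_rel a"
  shows "length v \<le> length u + completion_bound + 1" "length u \<le> length v + completion_bound + 1"
  using conv_length_le[OF bounded_completion_mult_rel single_valued_mult_rel]
    conv_length_le[OF bounded_completion_conv_converse[OF bounded_completion_mult_rel]
      single_valued_converse_mult_rel] assms
  by auto

lemma mult_rel_L: "(u, v) \<in> mult_rel a \<Longrightarrow> u \<in> L \<and> v \<in> L"
  by (simp add: mult_rel_def)

text \<open>A rung from \<open>take k u\<close> to \<open>take k v\<close> for a related pair: finish \<open>u\<close>, walk to \<open>\<psi> u\<close>, take the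
  edge labelled \<open>a\<close>, and walk back from \<open>\<psi> v\<close> along \<open>v\<close>.\<close>

definition rung :: "'a \<Rightarrow> nat \<Rightarrow> 'a letter list \<Rightarrow> 'a letter list \<Rightarrow> 'a letter list" where
  "rung a k u v = drop k u @ displacement_word u @ [(a, True)] @ inv_word (drop k v @ displacement_word v)"

lemma rung:
  assumes a: "a \<in> A" and uv: "(u, v) \<in> mult_rel a"
  shows "rung a k u v \<in> lists (gens A)" "group_eq A R (take k u @ rung a k u v) (take k v)"
    "length (rung a k u v) \<le> (length u - k) + (length v - k) + 1 + 2 * displacement (max (length u) (length v))"
proof -
  have L: "u \<in> L" "v \<in> L"
    using mult_rel_L[OF uv] by auto
  then have "u \<in> lists (gens A)" "v \<in> lists (gens A)"
    using L_lists by auto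
  then show "rung a k u v \<in> lists (gens A)"
    using displacement_word(1)[OF L(1)] displacement_word(1)[OF L(2)] letter_in_lists[OF a]
    by (simp add: rung_def drop_in_lists)
  have "group_eq A R (take k u @ (drop k u @ displacement_word u @ [(a, True)]))
                     (take k v @ (drop k v @ displacement_word v))"
    using mult_rel_group_eq[OF a uv] by (simp flip: append_assoc)
  then show "group_eq A R (take k u @ rung a k u v) (take k v)"
    unfolding rung_def using group_eq_move_right by fastforce
  have "displacement (length u) \<le> displacement (max (length u) (length v))"
    "displacement (length v) \<le> displacement (max (length u) (length v))"
    by (simp_all add: displacement_mono)
  then show "length (rung a k u v) \<le> (length u - k) + (length v - k) + 1 + 2 * displacement (max (length u) (length v))"
    using displacement_word(2)[OF L(1)] displacement_word(2)[OF L(2)] by (simp add: rung_def)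
qed

text \<open>Completing the common prefixes of \<open>u\<close> and \<open>v\<close> to a related pair with short tails gives
  a short rung at every height.\<close>

lemma mult_rel_short_rung:
  assumes a: "a \<in> A" and uv: "(u, v) \<in> mult_rel a"
  obtains x where "x \<in> lists (gens A)"
    "length x \<le> 2 * completion_bound + 1 + 2 * displacement (max (length u) (length v) + completion_bound)"
    "group_eq A R (take t u @ x) (take t v)"
proof -
  define S where "S = completion_bound"
  define m where "m = max (length u) (length v)"
  define t0 where "t0 = min t m"
  have take_t0: "take t u = take t0 u" "take t v = take t0 v"
    by (cases "t \<le> m"; simp add: t0_def m_def)+
  have "t0 \<le> m"
    by (simp add: t0_def)
  then obtain u' v' where uv': "(u', v') \<in> mult_rel a" "take t0 u' = take t0 u" "take t0 v' = take t0 v"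
    "max (length u') (length v') \<le> t0 + S"
    unfolding S_def m_def by (rule conv_completion[OF bounded_completion_mult_rel[OF a] uv])
  note r = rung[OF a uv'(1), of t0]
  have "displacement (max (length u') (length v')) \<le> displacement (m + S)"
    using uv'(4) \<open>t0 \<le> m\<close> by (intro displacement_mono) simp
  then have "length (rung a t0 u' v') \<le> 2 * S + 1 + 2 * displacement (m + S)"
    using r(3) uv'(4) by linarith
  then show ?thesis
    using that[of "rung a t0 u' v'"] r(1,2) uv'(2,3) take_t0 by (simp add: S_def m_def)
qed

definition rung_bound :: "nat \<Rightarrow> nat" where
  "rung_bound T = 2 * completion_bound + 1 + 2 * displacement (T + completion_bound)"

lemma rung_bound_mono: "T \<le> T' \<Longrightarrow> rung_bound T \<le> rung_bound T'"
  unfolding rung_bound_def using displacement_mono by simp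

lemma mult_rel_ladder:
  assumes a: "a \<in> A" and uv: "(u, v) \<in> mult_rel a" and T: "max (length u) (length v) \<le> T"
  obtains x where "x \<in> lists (gens A)" "length x \<le> rung_bound T"
    "has_area A R (T * dehn_nat A R (2 * rung_bound T + 2)) (u @ x @ inv_word v)"
proof -
  have "\<exists>x. x \<in> lists (gens A) \<and> length x \<le> rung_bound T \<and> group_eq A R (take t u @ x) (take t v)" for t
  proof -
    obtain x where "x \<in> lists (gens A)" "group_eq A R (take t u @ x) (take t v)"
      "length x \<le> 2 * completion_bound + 1 + 2 * displacement (max (length u) (length v) + completion_bound)"
      by (rule mult_rel_short_rung[OF a uv])
    moreover have "displacement (max (length u) (length v) + completion_bound) \<le> displacement (T + completion_bound)"
      using T by (simp add: displacement_mono)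
    ultimately show ?thesis
      unfolding rung_bound_def by (intro exI[of _ x]) simp
  qed
  then obtain x where x: "\<And>t. x t \<in> lists (gens A) \<and> length (x t) \<le> rung_bound T
      \<and> group_eq A R (take t u @ x t) (take t v)"
    by metis
  define x' where "x' t = (if t = 0 then [] else x t)" for t
  have x': "\<And>t. x' t \<in> lists (gens A) \<and> length (x' t) \<le> rung_bound T \<and> group_eq A R (take t u @ x' t) (take t v)"
    using x by (simp add: x'_def)
  moreover have "u \<in> lists (gens A)" "v \<in> lists (gens A)"
    using mult_rel_L[OF uv] L_lists by auto
  ultimately have "has_area A R (T * dehn_nat A R (2 * rung_bound T + 2)) (take T u @ x' T @ inv_word (take T v))"
    by (intro has_area_ladder[OF finite_A]) (simp_all add: x'_def)
  moreover have "take T u = u" "take T v = v"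
    using T by simp_all
  ultimately show ?thesis
    using that[of "x' T"] x'[of T] by simp
qed

subsection \<open>Filling a trivial word along its normal forms\<close>

definition normal_form :: "'a letter list \<Rightarrow> 'a letter list" where
  "normal_form w = the_inv_into L \<psi> (elem A R w)"

lemma normal_form:
  assumes "w \<in> lists (gens A)"
  shows "normal_form w \<in> L" "\<psi> (normal_form w) = elem A R w"
proof -
  have w: "elem A R w \<in> \<psi> ` L"
    using assms bij_psi unfolding bij_betw_def grp_def by blast
  show "normal_form w \<in> L"
    unfolding normal_form_def using the_inv_into_into[OF bij_betw_imp_inj_on[OF bij_psi] w] by simp
  show "\<psi> (normal_form w) = elem A R w"
    unfolding normal_form_def using f_the_inv_into_f[OF bij_betw_imp_inj_on[OF bij_psi] w] .
qed

lemma normal_form_step: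
  assumes w: "w \<in> lists (gens A)" and i: "i < length w" and wi: "w ! i = (a, b)"
  shows "a \<in> A"
    "if b then (normal_form (take i w), normal_form (take (Suc i) w)) \<in> mult_rel a
     else (normal_form (take (Suc i) w), normal_form (take i w)) \<in> mult_rel a"
proof -
  have take_Suc: "take (Suc i) w = take i w @ [(a, b)]"
    using i wi by (simp add: take_Suc_conv_app_nth)
  have lists: "take i w \<in> lists (gens A)" "take (Suc i) w \<in> lists (gens A)"
    using w by (simp_all add: take_in_lists)
  have "(a, b) \<in> gens A"
    using w i wi by (metis in_listsD nth_mem)
  then show a: "a \<in> A"
    by (simp add: gens_def)
  note nf = normal_form[OF lists(1)] normal_form[OF lists(2)]
  show "if b then (normal_form (take i w), normal_form (take (Suc i) w)) \<in> mult_rel a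
        else (normal_form (take (Suc i) w), normal_form (take i w)) \<in> mult_rel a"
  proof (cases b)
    case True
    then show ?thesis
      unfolding mult_rel_def using nf take_Suc elem_self[OF lists(1)]
      by (auto intro!: bexI[of _ "take i w"])
  next
    case False
    have "group_eq A R (take (Suc i) w @ [(a, True)]) (take i w)"
      using free_eq_imp_group_eq[OF free_eq_cancel[of "take i w" "(a, False)" "[]"]] take_Suc False
      by simp
    then have "elem A R (take i w) = elem A R (take (Suc i) w @ [(a, True)])"
      by (subst elem_eq_iff) (use lists letter_in_lists[OF a] in \<open>simp_all add: group_eq_sym\<close>)
    then show ?thesis
      unfolding mult_rel_def using nf elem_self[OF lists(2)] False
      by (auto intro!: bexI[of _ "take (Suc i) w"])
  qed
qed

lemma length_normal_form_take:
  assumes w: "w \<in> lists (gens A)" and "i \<le> length w"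
  shows "length (normal_form (take i w)) \<le> length (normal_form []) + i * (completion_bound + 1)"
  using assms(2)
proof (induction i)
  case (Suc i)
  then have i: "i < length w"
    by simp
  obtain a b where wi: "w ! i = (a, b)"
    by (cases "w ! i")
  have "length (normal_form (take (Suc i) w)) \<le> length (normal_form (take i w)) + completion_bound + 1"
    using normal_form_step[OF w i wi] mult_rel_length_le by (cases b) auto
  then show ?case
    using Suc by simp
qed simp

definition prefix_rep :: "'a letter list \<Rightarrow> nat \<Rightarrow> 'a letter list" where
  "prefix_rep w i = normal_form (take i w) @ displacement_word (normal_form (take i w))"

lemma prefix_rep:
  assumes "w \<in> lists (gens A)"
  shows "prefix_rep w i \<in> lists (gens A)" "group_eq A R (prefix_rep w i) (take i w)"
proof -
  have take: "take i w \<in> lists (gens A)"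
    using assms by (rule take_in_lists)
  note nf = normal_form[OF take]
  then show "prefix_rep w i \<in> lists (gens A)"
    using L_lists displacement_word(1)[OF nf(1)] by (auto simp: prefix_rep_def)
  then show "group_eq A R (prefix_rep w i) (take i w)"
    using take nf displacement_word(3)[OF nf(1)]
    by (subst elem_eq_iff[symmetric]) (simp_all add: prefix_rep_def)
qed

lemma normal_form_ladder:
  assumes w: "w \<in> lists (gens A)" and i: "i < length w"
    and T: "length (normal_form (take i w)) \<le> T" "length (normal_form (take (Suc i) w)) \<le> T"
  obtains x where "x \<in> lists (gens A)" "length x \<le> rung_bound T"
    "has_area A R (T * dehn_nat A R (2 * rung_bound T + 2))
       (normal_form (take i w) @ x @ inv_word (normal_form (take (Suc i) w)))"
proof -
  define u where "u = normal_form (take i w)"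
  define u' where "u' = normal_form (take (Suc i) w)"
  define K where "K = T * dehn_nat A R (2 * rung_bound T + 2)"
  obtain a b where wi: "w ! i = (a, b)"
    by (cases "w ! i")
  have lens: "max (length u) (length u') \<le> T" "max (length u') (length u) \<le> T"
    using T by (simp_all add: u_def u'_def)
  note step = normal_form_step[OF w i wi, folded u_def u'_def]
  show ?thesis
  proof (cases b)
    case True
    then show ?thesis
      using mult_rel_ladder[OF step(1) _ lens(1)] step(2) that unfolding K_def u_def u'_def by auto
  next
    case False
    then obtain x where "x \<in> lists (gens A)" "length x \<le> rung_bound T" "has_area A R K (u' @ x @ inv_word u)"
      using mult_rel_ladder[OF step(1) _ lens(2)] step(2) unfolding K_def by auto
    moreover from this(3) have "has_area A R K (inv_word (u' @ x @ inv_word u))"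
      by (rule has_area_inv_word)
    ultimately show ?thesis
      using that[of "inv_word x"] by (simp add: K_def u_def u'_def)
  qed
qed

text \<open>The cell of the \<open>i\<close>-th letter: the ladder between consecutive normal forms, closed up by the
  two displacement words.\<close>

lemma has_area_letter_cell:
  assumes w: "w \<in> lists (gens A)" and i: "i < length w"
    and T: "\<And>j. j \<le> length w \<Longrightarrow> length (normal_form (take j w)) \<le> T"
  shows "has_area A R ((T + 1) * dehn_nat A R (2 * rung_bound T + 2))
           (prefix_rep w i @ [w ! i] @ inv_word (prefix_rep w (Suc i)))"
proof -
  define u where "u = normal_form (take i w)"
  define u' where "u' = normal_form (take (Suc i) w)"
  define m where "m = displacement_word u @ [w ! i] @ inv_word (displacement_word u')"
  obtain x where x: "x \<in> lists (gens A)" "length x \<le> rung_bound T"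
    "has_area A R (T * dehn_nat A R (2 * rung_bound T + 2)) (u @ x @ inv_word u')"
    using normal_form_ladder[OF w i T[of i] T[of "Suc i"]] i unfolding u_def u'_def by auto
  have u: "u \<in> L" "u' \<in> L"
    unfolding u_def u'_def using w by (simp_all add: normal_form take_in_lists)
  have "has_area A R (T * dehn_nat A R (2 * rung_bound T + 2) + dehn_nat A R (2 * rung_bound T + 2))
          (u @ m @ inv_word u')"
  proof (rule has_area_glue_dehn_nat[OF finite_A _ x(3)])
    show "u' \<in> lists (gens A)" "x \<in> lists (gens A)"
      using u L_lists x(1) by auto
    have "group_eq A R (prefix_rep w i @ [w ! i]) (take (Suc i) w)"
      using group_eq_append_right[OF prefix_rep(2)[OF w, of i]] i by (simp add: take_Suc_conv_app_nth)
    then have "group_eq A R (prefix_rep w i @ [w ! i]) (prefix_rep w (Suc i))"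
      using group_eq_sym[OF prefix_rep(2)[OF w, of "Suc i"]] by (rule group_eq_trans)
    then show "trivial_word A R (u @ m @ inv_word u')"
      by (simp add: group_eq_def prefix_rep_def u_def u'_def m_def)
    show "m \<in> lists (gens A)"
      using displacement_word(1)[OF u(1)] displacement_word(1)[OF u(2)] w i
      by (simp add: m_def in_listsD)
    have "displacement (length u) \<le> displacement (T + completion_bound)"
      "displacement (length u') \<le> displacement (T + completion_bound)"
      using T[of i] T[of "Suc i"] i by (simp_all add: displacement_mono u_def u'_def)
    then show "length x + length m \<le> 2 * rung_bound T + 2"
      using x(2) displacement_word(2)[OF u(1)] displacement_word(2)[OF u(2)]
      by (simp add: m_def rung_bound_def)
  qed
  then show ?thesis
    by (simp add: m_def prefix_rep_def u_def u'_def add.commute)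
qed

definition nf_bound :: "nat \<Rightarrow> nat" where
  "nf_bound n = length (normal_form []) + n * (completion_bound + 1)"

lemma nf_bound_mono: "m \<le> n \<Longrightarrow> nf_bound m \<le> nf_bound n"
  unfolding nf_bound_def by (intro add_left_mono mult_le_mono1)

text \<open>The telescoping product of the letter cells is the conjugate of \<open>w\<close> by \<open>prefix_rep w 0\<close>,
  because \<open>w\<close> and the empty word have the same normal form.\<close>

lemma has_area_trivial_word:
  assumes w: "w \<in> lists (gens A)" and "trivial_word A R w"
  shows "has_area A R (length w * ((nf_bound (length w) + 1)
           * dehn_nat A R (2 * rung_bound (nf_bound (length w)) + 2))) w"
proof -
  define T where "T = nf_bound (length w)"
  have "has_area A R (length w * ((T + 1) * dehn_nat A R (2 * rung_bound T + 2)))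
          (prefix_rep w 0 @ w @ inv_word (prefix_rep w (length w)))"
  proof (rule has_area_telescope, rule has_area_letter_cell[OF w])
    show "length (normal_form (take j w)) \<le> T" if "j \<le> length w" for j
      using length_normal_form_take[OF w that] nf_bound_mono[OF that] by (simp add: T_def nf_bound_def)
  qed
  moreover have "elem A R w = elem A R []"
    using assms by (simp add: elem_eq_iff group_eq_def)
  then have "prefix_rep w (length w) = prefix_rep w 0"
    by (simp add: prefix_rep_def normal_form_def)
  ultimately show ?thesis
    unfolding T_def using has_area_unconj[OF prefix_rep(1)[OF w]] by simp
qed

lemma dehn_nat_le:
  "dehn_nat A R n \<le> n * ((nf_bound n + 1) * dehn_nat A R (2 * rung_bound (nf_bound n) + 2))"
proof -
  obtain w where w: "w \<in> lists (gens A)" "length w \<le> n" "trivial_word A R w"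
    "dehn_nat A R n = area A R w"
    using dehn_nat_attained[OF finite_A] .
  have "area A R w \<le> length w * ((nf_bound (length w) + 1)
          * dehn_nat A R (2 * rung_bound (nf_bound (length w)) + 2))"
    using area_le[OF has_area_trivial_word[OF w(1,3)]] .
  also have "\<dots> \<le> n * ((nf_bound n + 1) * dehn_nat A R (2 * rung_bound (nf_bound n) + 2))"
    using w(2) nf_bound_mono[OF w(2)] rung_bound_mono[OF nf_bound_mono[OF w(2)]]
      dehn_nat_mono[OF finite_A]
    by (intro mult_le_mono add_le_mono) auto
  finally show ?thesis
    using w(4) by simp
qed

lemma dehn_nat_recursive_bound:
  obtains c' C c :: nat where "c' > 0"
    "\<And>n. 1 \<le> n \<Longrightarrow> dehn_nat A R n \<le> C * n\<^sup>2 * dehn_nat A R (c + 4 * displacement (c' * n))"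
proof
  define c0 where "c0 = length (normal_form [])"
  define S where "S = completion_bound"
  show "c0 + 2 * S + 1 > 0"
    by simp
  fix n :: nat
  assume n: "1 \<le> n"
  have "c0 \<le> c0 * n" "S \<le> S * n"
    using n by simp_all
  then have "c0 + n * (S + 1) + 1 \<le> (c0 + S + 2) * n" "c0 + n * (S + 1) + S \<le> (c0 + 2 * S + 1) * n"
    using n mult.commute[of n S] mult.commute[of n c0] unfolding distrib_left distrib_right
    by linarith+
  then have "nf_bound n + 1 \<le> (c0 + S + 2) * n"
    and "2 * rung_bound (nf_bound n) + 2 \<le> 4 * S + 4 + 4 * displacement ((c0 + 2 * S + 1) * n)"
    using displacement_mono by (simp_all add: nf_bound_def rung_bound_def c0_def S_def)
  then have "n * ((nf_bound n + 1) * dehn_nat A R (2 * rung_bound (nf_bound n) + 2))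
      \<le> n * ((c0 + S + 2) * n * dehn_nat A R (4 * S + 4 + 4 * displacement ((c0 + 2 * S + 1) * n)))"
    using dehn_nat_mono[OF finite_A] by (intro mult_le_mono) auto
  then show "dehn_nat A R n \<le> (c0 + S + 2) * n\<^sup>2
      * dehn_nat A R (4 * S + 4 + 4 * displacement ((c0 + 2 * S + 1) * n))"
    using dehn_nat_le[of n] by (simp add: power2_eq_square algebra_simps)
qed

end

subsection \<open>Asymptotic estimates\<close>

lemma inF_on_nonzero_lower_bound:
  assumes "inF_on Q f" and "Q \<le> n0" and "f n0 \<noteq> 0"
  shows "f n0 > 0" and "\<And>m. n0 \<le> m \<Longrightarrow> f n0 \<le> f m"
  using assms unfolding inF_on_def by force+

lemma preceq_affine_bound:
  fixes h f :: "nat \<Rightarrow> real" and B \<epsilon> :: real and b c :: nat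
  assumes hf: "h \<preceq>\<^sub>F f" and \<epsilon>: "\<epsilon> > 0" "\<forall>m\<ge>n0. \<epsilon> \<le> f m" and c: "c > 0"
  obtains K M N :: nat where "K > 0" "M > 0" "\<And>n. N \<le> n \<Longrightarrow> B + real b * h (c * n) \<le> real K * f (M * n)"
proof -
  obtain Nh Kh Mh :: nat where Mh: "Mh > 0" and h: "\<And>n. Nh \<le> n \<Longrightarrow> h n \<le> real Kh * f (Mh * n)"
    using hf unfolding preceq_def by blast
  obtain k :: nat where k: "B < real k * \<epsilon>"
    using reals_Archimedean3[OF \<epsilon>(1)] by blast
  have "B + real b * h (c * n) \<le> real (b * Kh + k + 1) * f (Mh * c * n)" if n: "max Nh n0 \<le> n" for n
  proof -
    define F where "F = f (Mh * c * n)"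
    have "n \<le> Mh * c * n" "n \<le> c * n"
      using Mh c by simp_all
    then have "n0 \<le> Mh * c * n"
      using n by linarith
    then have F: "\<epsilon> \<le> F"
      using \<epsilon>(2) by (simp add: F_def)
    have "Nh \<le> c * n"
      using n \<open>n \<le> c * n\<close> by linarith
    then have "h (c * n) \<le> real Kh * F"
      using h by (simp add: F_def mult.assoc)
    then have "real b * h (c * n) \<le> real b * (real Kh * F)"
      by (simp add: mult_left_mono)
    moreover have "B \<le> real k * F"
      using k mult_left_mono[OF F, of "real k"] by linarith
    ultimately show ?thesis
      using F \<epsilon>(1) by (simp add: F_def algebra_simps)
  qed
  then show ?thesis
    using that[of "b * Kh + k + 1" "Mh * c" "max Nh n0"] Mh c by simp
qed

lemma preceq_ceiling_bound:
  fixes g :: "nat \<Rightarrow> nat" and q :: "nat \<Rightarrow> real"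
  assumes gq: "(\<lambda>n. real (g n)) \<preceq>\<^sub>F q" and "mono g" and q: "inF_on Q q"
  obtains K :: nat and Y :: real where "K > 0"
    "\<And>a y. real a \<le> y \<Longrightarrow> Y \<le> y \<Longrightarrow> real (g a) \<le> real K * q (nat \<lceil>real K * y\<rceil>)"
proof -
  obtain Nq Kq Mq :: nat where Kq: "Kq > 0" and Mq: "Mq > 0"
    and bound: "\<And>n. Nq \<le> n \<Longrightarrow> real (g n) \<le> real Kq * q (Mq * n)"
    using gq unfolding preceq_def by blast
  have "real (g a) \<le> real (Kq * Mq) * q (nat \<lceil>real (Kq * Mq) * y\<rceil>)"
    if a: "real a \<le> y" and y: "real (Nq + Q) \<le> y" for a y
  proof -
    define b where "b = nat \<lfloor>y\<rfloor>"
    have b: "a \<le> b" "Nq \<le> b" "Q \<le> b" "real b \<le> y"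
      using a y by (auto simp: b_def le_nat_floor)
    have Mq_b: "Q \<le> Mq * b"
      using b(3) Mq by (simp add: le_trans[of _ b])
    have "Mq * b \<le> nat \<lceil>real (Kq * Mq) * y\<rceil>"
    proof -
      have "real (Mq * b) \<le> real (Kq * Mq) * y"
        using b(4) Kq Mq y by (simp add: mult_mono)
      then show ?thesis
        by linarith
    qed
    then have "q (Mq * b) \<le> q (nat \<lceil>real (Kq * Mq) * y\<rceil>)" "0 \<le> q (Mq * b)"
      using q Mq_b unfolding inF_on_def by auto
    moreover have "real (g a) \<le> real Kq * q (Mq * b)"
      using monoD[OF \<open>mono g\<close> b(1)] bound[OF b(2)] by linarith
    moreover have "Kq \<le> Kq * Mq"
      using Mq by simp
    ultimately show ?thesis
      by (meson mult_mono of_nat_0_le_iff of_nat_le_iff order_trans)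
  qed
  then show ?thesis
    using that[of "Kq * Mq" "real (Nq + Q)"] Kq Mq by simp
qed

text \<open>The lower bound \<open>\<epsilon>\<close> on \<open>f\<close> absorbs the additive constants of the recursion.\<close>

lemma recursive_bound_sandwich:
  fixes D h :: "nat \<Rightarrow> nat" and f p q :: "nat \<Rightarrow> real" and C c c' b :: nat
  assumes "mono D" and recursive: "\<And>n. 1 \<le> n \<Longrightarrow> D n \<le> C * n\<^sup>2 * D (c + b * h (c' * n))"
    and "c' > 0" and hf: "(\<lambda>n. real (h n)) \<preceq>\<^sub>F f" and \<epsilon>: "\<epsilon> > 0" "\<forall>m\<ge>n0. \<epsilon> \<le> f m"
    and pD: "p \<preceq>\<^sub>F (\<lambda>n. real (D n))" and Dq: "(\<lambda>n. real (D n)) \<preceq>\<^sub>F q" and q: "inF_on Q q"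
  shows "\<exists>(C'::real) (K::nat) (M::nat) (N::nat). K > 0 \<and> M > 0 \<and>
           (\<forall>n\<ge>N. p n \<le> C' * (real n)\<^sup>2 * q (nat \<lceil>real K * f (M * n)\<rceil>))"
proof -
  obtain Np Kp Mp :: nat where Mp: "Mp > 0" and p: "\<And>n. Np \<le> n \<Longrightarrow> p n \<le> real Kp * real (D (Mp * n))"
    using pD unfolding preceq_def by blast
  obtain Kq :: nat and Y where Kq: "Kq > 0"
    and q_bound: "\<And>a y. real a \<le> y \<Longrightarrow> Y \<le> y \<Longrightarrow> real (D a) \<le> real Kq * q (nat \<lceil>real Kq * y\<rceil>)"
    using preceq_ceiling_bound[OF Dq \<open>mono D\<close> q] by blast
  obtain Ka Ma Na :: nat where Ka: "Ka > 0" "Ma > 0"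
    and affine: "\<And>n. Na \<le> n \<Longrightarrow> real c + \<bar>Y\<bar> + real b * real (h (c' * Mp * n)) \<le> real Ka * f (Ma * n)"
    using preceq_affine_bound[OF hf \<epsilon>, of "c' * Mp" "real c + \<bar>Y\<bar>" b] \<open>c' > 0\<close> Mp by auto
  have bound: "p n \<le> real (Kp * C * Mp\<^sup>2 * Kq) * (real n)\<^sup>2 * q (nat \<lceil>real (Kq * Ka) * f (Ma * n)\<rceil>)"
    if n: "max Np (max Na 1) \<le> n" for n
  proof -
    define a where "a = c + b * h (c' * (Mp * n))"
    define Q' where "Q' = q (nat \<lceil>real (Kq * Ka) * f (Ma * n)\<rceil>)"
    have "real c + \<bar>Y\<bar> + real b * real (h (c' * (Mp * n))) \<le> real Ka * f (Ma * n)"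
      using affine[of n] n by (simp add: mult.assoc)
    moreover have "0 \<le> real b * real (h (c' * (Mp * n)))"
      by simp
    moreover have "real a = real c + real b * real (h (c' * (Mp * n)))"
      by (simp add: a_def)
    ultimately have "real a \<le> real Ka * f (Ma * n)" "Y \<le> real Ka * f (Ma * n)"
      using abs_ge_self[of Y] abs_ge_zero[of Y] by linarith+
    then have Da: "real (D a) \<le> real Kq * Q'"
      using q_bound by (simp add: Q'_def mult.assoc)
    have "1 \<le> Mp * n"
      using Mp n by simp
    then have "D (Mp * n) \<le> C * (Mp * n)\<^sup>2 * D a"
      unfolding a_def by (rule recursive)
    then have "real (D (Mp * n)) \<le> real C * real (Mp * n) ^ 2 * real (D a)"
      by (metis of_nat_mono of_nat_mult of_nat_power)
    also have "\<dots> \<le> real C * real (Mp * n) ^ 2 * (real Kq * Q')"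
      using Da by (intro mult_left_mono) auto
    finally have "real Kp * real (D (Mp * n)) \<le> real Kp * (real C * real (Mp * n) ^ 2 * (real Kq * Q'))"
      by (intro mult_left_mono) auto
    then show ?thesis
      using p[of n] n by (simp add: Q'_def power_mult_distrib algebra_simps)
  qed
  then show ?thesis
    using Kq Ka by (intro exI[of _ "real (Kp * C * Mp\<^sup>2 * Kq)"] exI[of _ "Kq * Ka"] exI[of _ Ma]
        exI[of _ "max Np (max Na 1)"]) simp
qed

lemma ceiling_scaled_le:
  fixes K :: nat and F \<epsilon> :: real
  assumes "\<epsilon> > 0" and "\<epsilon> \<le> F"
  shows "real (nat \<lceil>real K * F\<rceil>) \<le> (real K + 1 / \<epsilon>) * F"
proof -
  have "0 \<le> real K * F"
    using assms by simp
  then have "real (nat \<lceil>real K * F\<rceil>) \<le> real K * F + 1"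
    by linarith
  also have "1 \<le> F / \<epsilon>"
    using assms by simp
  then have "real K * F + 1 \<le> (real K + 1 / \<epsilon>) * F"
    by (simp add: algebra_simps)
  finally show ?thesis .
qed

lemma powr_root_le:
  fixes n x C d :: real
  assumes d: "d > 2" and n: "1 \<le> n" and x: "0 \<le> x" and le: "n powr d \<le> C * n\<^sup>2 * x powr d"
  shows "n powr ((d - 2) / d) \<le> C powr (1 / d) * x"
proof -
  have "n powr (d - 2) = n powr d / n\<^sup>2"
    using n by (simp add: powr_diff)
  also have "\<dots> \<le> C * x powr d"
    using le n by (simp add: divide_le_eq mult.commute mult.left_commute)
  finally have le': "n powr (d - 2) \<le> C * x powr d" .
  have "0 < n powr (d - 2)"
    using n by simp
  then have "C > 0"
    using le' x by (metis linorder_not_le mult_nonpos_nonneg order_less_le_trans powr_ge_zero)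
  have "n powr ((d - 2) / d) = (n powr (d - 2)) powr (1 / d)"
    by (simp add: powr_powr)
  also have "\<dots> \<le> (C * x powr d) powr (1 / d)"
    using le' d by (intro powr_mono2) auto
  also have "\<dots> = C powr (1 / d) * x"
    using d x \<open>C > 0\<close> by (simp add: powr_mult powr_powr)
  finally show ?thesis .
qed

lemma powr_sandwich_lower_bound:
  fixes f :: "nat \<Rightarrow> real" and d C \<epsilon> :: real and K M N :: nat
  assumes d: "d > 2" and \<epsilon>: "\<epsilon> > 0" "\<forall>m\<ge>n0. \<epsilon> \<le> f m" and M: "M > 0"
    and H: "\<And>n. N \<le> n \<Longrightarrow> real n powr d \<le> C * (real n)\<^sup>2 * real (nat \<lceil>real K * f (M * n)\<rceil>) powr d"
  shows "(\<lambda>n. real n powr ((d - 2) / d)) \<preceq>\<^sub>F f"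
proof -
  define c where "c = C powr (1 / d) * (real K + 1 / \<epsilon>)"
  have "real n powr ((d - 2) / d) \<le> real (nat \<lceil>c\<rceil> + 1) * f (M * n)" if n: "max N (max 1 n0) \<le> n" for n
  proof -
    define F where "F = f (M * n)"
    have "n \<le> M * n"
      using M by simp
    then have "n0 \<le> M * n"
      using n by linarith
    then have F: "\<epsilon> \<le> F"
      using \<epsilon>(2) by (simp add: F_def)
    have "real n powr ((d - 2) / d) \<le> C powr (1 / d) * real (nat \<lceil>real K * F\<rceil>)"
      using powr_root_le[OF d _ _ H] n by (simp add: F_def)
    also have "\<dots> \<le> C powr (1 / d) * ((real K + 1 / \<epsilon>) * F)"
      using ceiling_scaled_le[OF \<epsilon>(1) F] by (intro mult_left_mono) auto
    also have "\<dots> = c * F"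
      by (simp add: c_def)
    also have "\<dots> \<le> real (nat \<lceil>c\<rceil> + 1) * F"
    proof (rule mult_right_mono)
      show "c \<le> real (nat \<lceil>c\<rceil> + 1)"
        by linarith
    qed (use F \<epsilon>(1) in simp)
    finally show ?thesis
      by (simp add: F_def)
  qed
  then show ?thesis
    unfolding preceq_def using M by (intro exI[of _ "max N (max 1 n0)"] exI[of _ "nat \<lceil>c\<rceil> + 1"] exI[of _ M]) auto
qed

lemma le_ln_of_exp_le:
  fixes n x C :: real
  assumes n: "n > 0" and le: "exp n \<le> C * n\<^sup>2 * exp x"
  shows "n \<le> ln C + 2 * ln n + x"
proof -
  have "C > 0"
  proof (rule ccontr)
    assume "\<not> C > 0"
    then have "C * n\<^sup>2 * exp x \<le> 0"
      by (simp add: mult_nonpos_nonneg)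
    with le show False
      using exp_gt_zero[of n] by linarith
  qed
  have "n = ln (exp n)"
    by simp
  also have "\<dots> \<le> ln (C * n\<^sup>2 * exp x)"
    using le \<open>C > 0\<close> n by (subst ln_le_cancel_iff) auto
  also have "\<dots> = ln C + 2 * ln n + x"
    using \<open>C > 0\<close> n by (simp add: ln_mult ln_realpow)
  finally show ?thesis .
qed

lemma exp_sandwich_lower_bound:
  fixes f :: "nat \<Rightarrow> real" and C \<epsilon> :: real and K M N :: nat
  assumes \<epsilon>: "\<epsilon> > 0" "\<forall>m\<ge>n0. \<epsilon> \<le> f m" and M: "M > 0"
    and H: "\<And>n. N \<le> n \<Longrightarrow> exp (real n) \<le> C * (real n)\<^sup>2 * exp (real (nat \<lceil>real K * f (M * n)\<rceil>))"
  shows "(\<lambda>n. real n) \<preceq>\<^sub>F f"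
proof -
  have "eventually (\<lambda>n. ln C + 2 * ln (real n) + 1 \<le> real n / 2) sequentially"
    by real_asymp
  then obtain N' where N': "\<And>n. N' \<le> n \<Longrightarrow> ln C + 2 * ln (real n) + 1 \<le> real n / 2"
    unfolding eventually_sequentially by blast
  have "real n \<le> real (2 * K + 1) * f (M * n)" if n: "max N (max 1 (max n0 N')) \<le> n" for n
  proof -
    define F where "F = f (M * n)"
    define x where "x = real (nat \<lceil>real K * F\<rceil>)"
    have "n \<le> M * n"
      using M by simp
    then have "n0 \<le> M * n"
      using n by linarith
    then have F: "\<epsilon> \<le> F"
      using \<epsilon>(2) by (simp add: F_def)
    then have x: "x \<le> real K * F + 1"
      using \<epsilon>(1) unfolding x_def by (simp add: of_nat_nat)
    have npos: "real n > 0"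
      using n by simp
    have le: "exp (real n) \<le> C * (real n)\<^sup>2 * exp x"
      using H n by (simp add: x_def F_def)
    have "real n \<le> ln C + 2 * ln (real n) + x"
      using le_ln_of_exp_le[OF npos le] .
    then have "real n \<le> 2 * (real K * F)"
      using N'[of n] n x by linarith
    also have "\<dots> \<le> real (2 * K + 1) * F"
      using F \<epsilon>(1) by (simp add: algebra_simps)
    finally show ?thesis
      by (simp add: F_def)
  qed
  then show ?thesis
    unfolding preceq_def using M
    by (intro exI[of _ "max N (max 1 (max n0 N'))"] exI[of _ "2 * K + 1"] exI[of _ M]) auto
qed

lemma dehn_sandwich_bound:
  fixes f p q :: "nat \<Rightarrow> real" and \<epsilon> :: real
  assumes "finite A" and "in_B A R f" and "\<epsilon> > 0" "\<forall>m\<ge>n0. \<epsilon> \<le> f m"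
    and "p \<preceq>\<^sub>F dehn A R" and "dehn A R \<preceq>\<^sub>F q" and "inF q"
  shows "\<exists>(C::real) (K::nat) (M::nat) (N::nat). K > 0 \<and> M > 0 \<and>
           (\<forall>n\<ge>N. p n \<le> C * (real n)\<^sup>2 * q (nat \<lceil>real K * f (M * n)\<rceil>))"
proof -
  obtain L \<psi> where "cayley_automatic A R L \<psi>" and hf: "ca_function A R L \<psi> \<preceq>\<^sub>F f"
    using assms(2) unfolding in_B_def by blast
  then interpret cayley_automatic_rep A R L \<psi>
    using assms(1) by unfold_locales
  obtain c' C c :: nat where "c' > 0"
    and "\<And>n. 1 \<le> n \<Longrightarrow> dehn_nat A R n \<le> C * n\<^sup>2 * dehn_nat A R (c + 4 * displacement (c' * n))"
    using dehn_nat_recursive_bound by metis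
  moreover have "mono (dehn_nat A R)"
    using dehn_nat_mono[OF assms(1)] by (auto intro: monoI)
  moreover obtain Q where "inF_on Q q"
    using assms(7) unfolding inF_def by blast
  moreover have "(\<lambda>n. real (displacement n)) \<preceq>\<^sub>F f"
    using hf by (simp add: ca_function_eq)
  ultimately show ?thesis
    using assms(3-6) by (intro recursive_bound_sandwich) (simp_all add: dehn_eq_dehn_nat)
qed

lemma dehn_powr_lower_bound:
  fixes f :: "nat \<Rightarrow> real" and d \<epsilon> :: real
  assumes "finite A" and "in_B A R f" and \<epsilon>: "\<epsilon> > 0" "\<forall>m\<ge>n0. \<epsilon> \<le> f m"
    and d: "d > 2" and "(\<lambda>n. real n powr d) \<preceq>\<^sub>F dehn A R" and "dehn A R \<preceq>\<^sub>F (\<lambda>n. real n powr d)"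
  shows "(\<lambda>n. real n powr ((d - 2) / d)) \<preceq>\<^sub>F f"
proof -
  have "inF (\<lambda>n. real n powr d)"
    unfolding inF_def inF_on_def using d by (intro exI[of _ 0]) (auto intro!: powr_mono2)
  then obtain C K M N where "M > 0"
    "\<forall>n\<ge>N. real n powr d \<le> C * (real n)\<^sup>2 * real (nat \<lceil>real K * f (M * n)\<rceil>) powr d"
    using dehn_sandwich_bound[OF assms(1-4,6,7)] by blast
  then show ?thesis
    using powr_sandwich_lower_bound[OF d \<epsilon>] by blast
qed

lemma dehn_exp_lower_bound:
  fixes f :: "nat \<Rightarrow> real" and \<epsilon> :: real
  assumes "finite A" and "in_B A R f" and \<epsilon>: "\<epsilon> > 0" "\<forall>m\<ge>n0. \<epsilon> \<le> f m"
    and "(\<lambda>n. exp (real n)) \<preceq>\<^sub>F dehn A R" and "dehn A R \<preceq>\<^sub>F (\<lambda>n. exp (real n))"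
  shows "(\<lambda>n. real n) \<preceq>\<^sub>F f"
proof -
  have "inF (\<lambda>n. exp (real n))"
    unfolding inF_def inF_on_def by auto
  then obtain C K M N where "M > 0"
    "\<forall>n\<ge>N. exp (real n) \<le> C * (real n)\<^sup>2 * exp (real (nat \<lceil>real K * f (M * n)\<rceil>))"
    using dehn_sandwich_bound[OF assms(1-6)] by blast
  then show ?thesis
    using exp_sandwich_lower_bound[OF \<epsilon>] by blast
qed

theorem mainTheorem2:
  fixes A :: "'a set" and R :: "'a letter list set" and f :: "nat \<Rightarrow> real"
  assumes "finite A" and "finite R" and "R \<subseteq> lists (gens A)"
    and "inF f" and "\<exists>Q. inF_on Q f \<and> (\<exists>n\<ge>Q. f n \<noteq> 0)"
    and "in_B A R f"
  shows "(\<forall>p q. inF p \<and> inF q \<and> p \<preceq>\<^sub>F dehn A R \<and> dehn A R \<preceq>\<^sub>F q \<longrightarrow>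
            (\<exists>(C::real) (K::nat) (M::nat) (N::nat). K > 0 \<and> M > 0 \<and>
               (\<forall>n\<ge>N. p n \<le> C * (real n)\<^sup>2 * q (nat \<lceil>real K * f (M * n)\<rceil>))))
       \<and> (\<forall>d::real. d > 2 \<and> (\<lambda>n. real n powr d) \<preceq>\<^sub>F dehn A R \<and> dehn A R \<preceq>\<^sub>F (\<lambda>n. real n powr d)
            \<longrightarrow> (\<lambda>n. real n powr ((d - 2) / d)) \<preceq>\<^sub>F f)
       \<and> ((\<lambda>n. exp (real n)) \<preceq>\<^sub>F dehn A R \<and> dehn A R \<preceq>\<^sub>F (\<lambda>n. exp (real n))
            \<longrightarrow> (\<lambda>n. real n) \<preceq>\<^sub>F f)"
proof -
  obtain Q n0 where "inF_on Q f" "Q \<le> n0" "f n0 \<noteq> 0"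
    using assms(5) by blast
  then have \<epsilon>: "f n0 > 0" "\<forall>m\<ge>n0. f n0 \<le> f m"
    using inF_on_nonzero_lower_bound by blast+
  show ?thesis
    using dehn_sandwich_bound[OF assms(1,6) \<epsilon>] dehn_powr_lower_bound[OF assms(1,6) \<epsilon>]
      dehn_exp_lower_bound[OF assms(1,6) \<epsilon>]
    by blast
qed

end
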